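(* Let $q\ge2$ and let $b,c$ be positive integers. Then either there is no $(b,c)$-coloring of $H(n,q)$ for any positive integer $n$, or there exists $n_0=n_0(b,c;q)$ such that a $(b,c)$-coloring of $H(n,q)$ exists if and only if $n\ge n_0$.
   Context: The Hamming graph $H(n,q)$ has vertex set $\mathbb{Z}_q^n$, two vertices adjacent iff they differ in exactly one coordinate. A $(b,c)$-coloring of $H(n,q)$ is a surjective map onto $\{1,2\}$ in which each color-1 vertex has exactly $b$ neighbours of color 2 and each color-2 vertex has exactly $c$ neighbours of color 1. *)

theory Defs
  imports Main
begin

text \<open>Vertex set of the Hamming graph H(n,q): words of length n over {0..<q},
  represented canonically as functions nat => nat that vanish from index n on.\<close>
definition hamming_vertices :: "nat \<Rightarrow> nat \<Rightarrow> (nat \<Rightarrow> nat) set" where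
  "hamming_vertices n q = {v. (\<forall>i<n. v i < q) \<and> (\<forall>i\<ge>n. v i = 0)}"

definition hamming_adj :: "nat \<Rightarrow> (nat \<Rightarrow> nat) \<Rightarrow> (nat \<Rightarrow> nat) \<Rightarrow> bool" where
  "hamming_adj n u v \<longleftrightarrow> card {i. i < n \<and> u i \<noteq> v i} = 1"

definition bc_coloring :: "nat \<Rightarrow> nat \<Rightarrow> nat \<Rightarrow> nat \<Rightarrow> ((nat \<Rightarrow> nat) \<Rightarrow> nat) \<Rightarrow> bool" where
  "bc_coloring n q b c f \<longleftrightarrow>
     f ` hamming_vertices n q = {1, 2} \<and>
     (\<forall>v\<in>hamming_vertices n q. f v = 1 \<longrightarrow>
        card {u \<in> hamming_vertices n q. hamming_adj n v u \<and> f u = 2} = b) \<and>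
     (\<forall>v\<in>hamming_vertices n q. f v = 2 \<longrightarrow>
        card {u \<in> hamming_vertices n q. hamming_adj n v u \<and> f u = 1} = c)"

definition has_bc_coloring :: "nat \<Rightarrow> nat \<Rightarrow> nat \<Rightarrow> nat \<Rightarrow> bool" where
  "has_bc_coloring n q b c \<longleftrightarrow> (\<exists>f. bc_coloring n q b c f)"

end

theory Submission
  imports Defs
begin

text \<open>A colouring of H(n,q) lifts to H(n+1,q) by ignoring the last coordinate: two adjacent
  words of different colours then differ inside the first n coordinates, so they agree in the
  last one, and the neighbours of v of the other colour correspond bijectively to those of its
  prefix in H(n,q). Hence colourability is monotone in n, and the set of admissible n is a ray.\<close>

definition hamming_prefix :: "nat \<Rightarrow> (nat \<Rightarrow> nat) \<Rightarrow> nat \<Rightarrow> nat" where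
  "hamming_prefix n v = (\<lambda>i. if i < n then v i else 0)"

lemma hamming_adj_Suc_iff:
  "hamming_adj (Suc n) v u \<longleftrightarrow>
     (v n \<noteq> u n \<and> {i. i < n \<and> v i \<noteq> u i} = {}) \<or>
     (v n = u n \<and> card {i. i < n \<and> v i \<noteq> u i} = 1)"
proof (cases "v n = u n")
  case True
  then have "{i. i < Suc n \<and> v i \<noteq> u i} = {i. i < n \<and> v i \<noteq> u i}"
    by (auto simp: less_Suc_eq)
  with True show ?thesis by (simp add: hamming_adj_def)
next
  case False
  then have "{i. i < Suc n \<and> v i \<noteq> u i} = insert n {i. i < n \<and> v i \<noteq> u i}"
    by (auto simp: less_Suc_eq)
  with False show ?thesis by (simp add: hamming_adj_def)
qed

lemma hamming_adj_prefix_iff: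
  "hamming_adj n (hamming_prefix n v) w \<longleftrightarrow> card {i. i < n \<and> v i \<noteq> w i} = 1"
proof -
  have "{i. i < n \<and> hamming_prefix n v i \<noteq> w i} = {i. i < n \<and> v i \<noteq> w i}"
    by (auto simp: hamming_prefix_def)
  then show ?thesis by (simp add: hamming_adj_def)
qed

lemma hamming_prefix_in_vertices:
  "v \<in> hamming_vertices (Suc n) q \<Longrightarrow> hamming_prefix n v \<in> hamming_vertices n q"
  by (auto simp: hamming_vertices_def hamming_prefix_def)

lemma hamming_prefix_eq_self:
  "w \<in> hamming_vertices n q \<Longrightarrow> hamming_prefix n w = w"
  by (auto simp: hamming_vertices_def hamming_prefix_def fun_eq_iff not_less)

lemma hamming_prefix_fun_upd: "hamming_prefix n (w(n := a)) = hamming_prefix n w"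
  by (simp add: hamming_prefix_def fun_eq_iff)

lemma hamming_vertices_fun_upd_Suc:
  "w \<in> hamming_vertices n q \<Longrightarrow> a < q \<Longrightarrow> w(n := a) \<in> hamming_vertices (Suc n) q"
  by (auto simp: hamming_vertices_def less_Suc_eq)

lemma hamming_prefix_image:
  assumes "q > 0"
  shows "hamming_prefix n ` hamming_vertices (Suc n) q = hamming_vertices n q"
proof
  show "hamming_prefix n ` hamming_vertices (Suc n) q \<subseteq> hamming_vertices n q"
    using hamming_prefix_in_vertices by blast
next
  show "hamming_vertices n q \<subseteq> hamming_prefix n ` hamming_vertices (Suc n) q"
  proof
    fix w assume w: "w \<in> hamming_vertices n q"
    then have "w = hamming_prefix n (w(n := 0))"
      by (simp add: hamming_prefix_fun_upd hamming_prefix_eq_self)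
    with hamming_vertices_fun_upd_Suc[OF w \<open>q > 0\<close>]
    show "w \<in> hamming_prefix n ` hamming_vertices (Suc n) q" by blast
  qed
qed

text \<open>The hypothesis on the colour of the prefix of v is what forces every counted neighbour
  to differ from v inside the first n coordinates.\<close>
lemma lifted_neighbours_eq_image:
  assumes v: "v \<in> hamming_vertices (Suc n) q" and fv: "f (hamming_prefix n v) \<noteq> k"
  shows "{u \<in> hamming_vertices (Suc n) q. hamming_adj (Suc n) v u \<and> f (hamming_prefix n u) = k}
       = (\<lambda>w. w(n := v n)) ` {w \<in> hamming_vertices n q. hamming_adj n (hamming_prefix n v) w \<and> f w = k}"
    (is "?lifted = ?g ` ?base")
proof
  show "?lifted \<subseteq> ?g ` ?base"
  proof
    fix u assume u: "u \<in> ?lifted"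
    then have uV: "u \<in> hamming_vertices (Suc n) q" and adj: "hamming_adj (Suc n) v u"
      and fu: "f (hamming_prefix n u) = k" by auto
    have "hamming_prefix n u \<noteq> hamming_prefix n v" using fu fv by auto
    then have "{i. i < n \<and> v i \<noteq> u i} \<noteq> {}"
      by (auto simp: hamming_prefix_def fun_eq_iff split: if_splits)
    with adj have last: "v n = u n" and diff: "card {i. i < n \<and> v i \<noteq> u i} = 1"
      by (auto simp: hamming_adj_Suc_iff)
    have "u = ?g (hamming_prefix n u)"
      using uV last by (auto simp: hamming_vertices_def hamming_prefix_def fun_eq_iff)
    moreover have "{i. i < n \<and> v i \<noteq> hamming_prefix n u i} = {i. i < n \<and> v i \<noteq> u i}"
      by (auto simp: hamming_prefix_def)
    then have "hamming_prefix n u \<in> ?base"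
      using diff fu hamming_prefix_in_vertices[OF uV] by (simp add: hamming_adj_prefix_iff)
    ultimately show "u \<in> ?g ` ?base" by blast
  qed
next
  show "?g ` ?base \<subseteq> ?lifted"
  proof
    fix u assume "u \<in> ?g ` ?base"
    then obtain w where w: "w \<in> ?base" and uw: "u = ?g w" by blast
    then have wV: "w \<in> hamming_vertices n q" by simp
    have "v n < q" using v by (simp add: hamming_vertices_def)
    then have uV: "u \<in> hamming_vertices (Suc n) q"
      using uw hamming_vertices_fun_upd_Suc[OF wV] by simp
    have "hamming_prefix n u = w"
      using uw hamming_prefix_fun_upd hamming_prefix_eq_self[OF wV] by simp
    moreover have "{i. i < n \<and> v i \<noteq> u i} = {i. i < n \<and> v i \<noteq> w i}"
      using uw by auto
    then have "hamming_adj (Suc n) v u"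
      using w uw by (simp add: hamming_adj_Suc_iff hamming_adj_prefix_iff)
    ultimately show "u \<in> ?lifted" using uV w by simp
  qed
qed

lemma card_lifted_neighbours:
  assumes "v \<in> hamming_vertices (Suc n) q" and "f (hamming_prefix n v) \<noteq> k"
  shows "card {u \<in> hamming_vertices (Suc n) q. hamming_adj (Suc n) v u \<and> f (hamming_prefix n u) = k}
       = card {w \<in> hamming_vertices n q. hamming_adj n (hamming_prefix n v) w \<and> f w = k}"
proof -
  have "inj_on (\<lambda>w. w(n := v n)) (hamming_vertices n q)"
    by (rule inj_on_inverseI[where g = "hamming_prefix n"])
       (simp add: hamming_prefix_fun_upd hamming_prefix_eq_self)
  then have "inj_on (\<lambda>w. w(n := v n))
      {w \<in> hamming_vertices n q. hamming_adj n (hamming_prefix n v) w \<and> f w = k}"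
    by (rule inj_on_subset) blast
  with lifted_neighbours_eq_image[of v n q f k, OF assms] show ?thesis by (simp add: card_image)
qed

lemma bc_coloring_lift_Suc:
  assumes "q > 0" and f: "bc_coloring n q b c f"
  shows "bc_coloring (Suc n) q b c (\<lambda>v. f (hamming_prefix n v))"
  unfolding bc_coloring_def
proof (intro conjI ballI impI)
  have "(\<lambda>v. f (hamming_prefix n v)) ` hamming_vertices (Suc n) q
      = f ` hamming_prefix n ` hamming_vertices (Suc n) q"
    by (simp add: image_image)
  with f hamming_prefix_image[OF \<open>q > 0\<close>]
  show "(\<lambda>v. f (hamming_prefix n v)) ` hamming_vertices (Suc n) q = {1, 2}"
    by (simp add: bc_coloring_def)
next
  fix v assume v: "v \<in> hamming_vertices (Suc n) q" and fv: "f (hamming_prefix n v) = 1"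
  have "card {u \<in> hamming_vertices (Suc n) q. hamming_adj (Suc n) v u \<and> f (hamming_prefix n u) = 2}
      = card {w \<in> hamming_vertices n q. hamming_adj n (hamming_prefix n v) w \<and> f w = 2}"
    using v fv by (intro card_lifted_neighbours) simp_all
  also have "\<dots> = b"
    using f hamming_prefix_in_vertices[OF v] fv by (simp add: bc_coloring_def)
  finally show "card {u \<in> hamming_vertices (Suc n) q.
      hamming_adj (Suc n) v u \<and> f (hamming_prefix n u) = 2} = b" .
next
  fix v assume v: "v \<in> hamming_vertices (Suc n) q" and fv: "f (hamming_prefix n v) = 2"
  have "card {u \<in> hamming_vertices (Suc n) q. hamming_adj (Suc n) v u \<and> f (hamming_prefix n u) = 1}
      = card {w \<in> hamming_vertices n q. hamming_adj n (hamming_prefix n v) w \<and> f w = 1}"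
    using v fv by (intro card_lifted_neighbours) simp_all
  also have "\<dots> = c"
    using f hamming_prefix_in_vertices[OF v] fv by (simp add: bc_coloring_def)
  finally show "card {u \<in> hamming_vertices (Suc n) q.
      hamming_adj (Suc n) v u \<and> f (hamming_prefix n u) = 1} = c" .
qed

lemma has_bc_coloring_mono:
  assumes "q > 0" and "has_bc_coloring n q b c" and "n \<le> m"
  shows "has_bc_coloring m q b c"
  using \<open>n \<le> m\<close>
proof (induction m rule: dec_induct)
  case base
  show ?case using assms(2) .
next
  case (step m)
  then obtain f where "bc_coloring m q b c f" by (auto simp: has_bc_coloring_def)
  then show ?case
    unfolding has_bc_coloring_def by (blast intro: bc_coloring_lift_Suc[OF \<open>q > 0\<close>])
qed

lemma upward_closed_positive_threshold:
  fixes P :: "nat \<Rightarrow> bool"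
  assumes "\<And>n m. 0 < n \<Longrightarrow> P n \<Longrightarrow> n \<le> m \<Longrightarrow> P m"
  shows "(\<forall>n>0. \<not> P n) \<or> (\<exists>n0. \<forall>n>0. P n \<longleftrightarrow> n \<ge> n0)"
proof (cases "\<exists>n>0. P n")
  case True
  define n0 where "n0 = (LEAST n. 0 < n \<and> P n)"
  have n0: "0 < n0 \<and> P n0"
    unfolding n0_def using True by (rule LeastI_ex)
  have "n0 \<le> n" if "0 < n" "P n" for n
    unfolding n0_def using that by (simp add: Least_le)
  with n0 assms have "\<forall>n>0. P n \<longleftrightarrow> n \<ge> n0" by blast
  then show ?thesis by blast
qed blast

theorem proposition10:
  fixes q b c :: nat
  assumes "q \<ge> 2" and "b > 0" and "c > 0"
  shows "(\<forall>n>0. \<not> has_bc_coloring n q b c) \<or>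
         (\<exists>n0. \<forall>n>0. has_bc_coloring n q b c \<longleftrightarrow> n \<ge> n0)"
proof (rule upward_closed_positive_threshold)
  fix n m assume "has_bc_coloring n q b c" "n \<le> m"
  moreover have "q > 0" using \<open>q \<ge> 2\<close> by simp
  ultimately show "has_bc_coloring m q b c" by (rule has_bc_coloring_mono[rotated])
qed

end
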